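(* Let $(\Omega,d)$ be a compact metric space, let $n\ge1$, and fix $Y_1,\dots,Y_n\in\Omega$. Let $\Delta^{n-1}=\{w\in\mathbb{R}^n: w_i\ge0,\ \sum_i w_i=1\}$ and assume that for every $w\in\Delta^{n-1}$ the weighted Fréchet mean $\mu(w)=\operatorname{argmin}_{y\in\Omega}\sum_{i=1}^n w_i d^2(y,Y_i)$ exists and is unique. Let $w:\mathbb{R}^p\to\Delta^{n-1}$ be continuous and set $m=\mu\circ w$. Then for every $\epsilon>0$ there exists a neural network $w_{\theta^*}:\mathbb{R}^p\to\Delta^{n-1}$ such that $m_{\theta^*}=\mu\circ w_{\theta^*}$ satisfies \[\sup_{\|x\|\le 1} d\big(m_{\theta^*}(x),m(x)\big)<\epsilon.\] Moreover, if $X$ is a stochastically bounded random vector in $\mathbb{R}^p$, then for every $\epsilon>0$ and every $\delta>0$ there exists a neural network $w_{\theta^*}$ such that \[P\big(d(m_{\theta^*}(X),m(X))<\epsilon\big)>1-\delta.\]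
   Context: Here a "neural network" $w_\theta:\mathbb{R}^p\to\Delta^{n-1}$ with parameters $\theta$ means a fully connected feedforward network with hidden layers using ReLU activations followed by a softmax output layer producing an $n$-dimensional probability vector; the number of layers and neurons is arbitrary. $\|x\|$ denotes the Euclidean norm on $\mathbb{R}^p$. $X$ stochastically bounded means that for every $\delta>0$ there is $M_\delta$ with $P(\|X\|\le M_\delta)>1-\delta$. *)

theory Defs
  imports "HOL-Probability.Probability"
begin

definition prob_simplex :: "nat \<Rightarrow> (nat \<Rightarrow> real) set" where
  "prob_simplex n = {w. (\<forall>i<n. 0 \<le> w i) \<and> (\<Sum>i<n. w i) = 1 \<and> (\<forall>i\<ge>n. w i = 0)}"

definition frechet_obj :: "nat \<Rightarrow> (nat \<Rightarrow> 'a::metric_space) \<Rightarrow> (nat \<Rightarrow> real) \<Rightarrow> 'a \<Rightarrow> real" where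
  "frechet_obj n Y w y = (\<Sum>i<n. w i * (dist y (Y i))\<^sup>2)"

definition is_frechet_mean :: "'a::metric_space set \<Rightarrow> nat \<Rightarrow> (nat \<Rightarrow> 'a) \<Rightarrow> (nat \<Rightarrow> real) \<Rightarrow> 'a \<Rightarrow> bool" where
  "is_frechet_mean \<Omega> n Y w y \<longleftrightarrow> y \<in> \<Omega> \<and> (\<forall>z\<in>\<Omega>. frechet_obj n Y w y \<le> frechet_obj n Y w z)"

definition frechet_mean :: "'a::metric_space set \<Rightarrow> nat \<Rightarrow> (nat \<Rightarrow> 'a) \<Rightarrow> (nat \<Rightarrow> real) \<Rightarrow> 'a" where
  "frechet_mean \<Omega> n Y w = (THE y. is_frechet_mean \<Omega> n Y w y)"

definition relu :: "real \<Rightarrow> real" where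
  "relu t = max 0 t"

definition affine_layer :: "nat \<Rightarrow> (nat \<Rightarrow> nat \<Rightarrow> real) \<Rightarrow> (nat \<Rightarrow> real) \<Rightarrow> (nat \<Rightarrow> real) \<Rightarrow> (nat \<Rightarrow> real)" where
  "affine_layer d W b v = (\<lambda>j. (\<Sum>i<d. W j i * v i) + b j)"

definition softmax :: "nat \<Rightarrow> (nat \<Rightarrow> real) \<Rightarrow> (nat \<Rightarrow> real)" where
  "softmax n z = (\<lambda>i. if i < n then exp (z i) / (\<Sum>j<n. exp (z j)) else 0)"

text \<open>A network: first affine layer on R^p (rows A j, biases a j), then a list of
  layers (input width d, weights W, biases b); ReLU is applied before every layer
  in the list (i.e. to every hidden pre-activation); the last pre-activation goes
  through softmax.\<close>
type_synonym 'p network =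
  "(nat \<Rightarrow> real ^ 'p) \<times> (nat \<Rightarrow> real) \<times> (nat \<times> (nat \<Rightarrow> nat \<Rightarrow> real) \<times> (nat \<Rightarrow> real)) list"

fun apply_layers :: "(nat \<times> (nat \<Rightarrow> nat \<Rightarrow> real) \<times> (nat \<Rightarrow> real)) list \<Rightarrow> (nat \<Rightarrow> real) \<Rightarrow> (nat \<Rightarrow> real)" where
  "apply_layers [] v = v"
| "apply_layers ((d, W, b) # ls) v = apply_layers ls (affine_layer d W b (relu \<circ> v))"

definition nn_eval :: "nat \<Rightarrow> 'p::finite network \<Rightarrow> real ^ 'p \<Rightarrow> (nat \<Rightarrow> real)" where
  "nn_eval n \<theta> x = (case \<theta> of (A, a, ls) \<Rightarrow>
      softmax n (apply_layers ls (\<lambda>j. inner (A j) x + a j)))"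

definition stoch_bounded :: "'b measure \<Rightarrow> ('b \<Rightarrow> 'c::real_normed_vector) \<Rightarrow> bool" where
  "stoch_bounded M X \<longleftrightarrow> (\<forall>\<delta>>0. \<exists>C. measure M {\<omega>\<in>space M. norm (X \<omega>) \<le> C} > 1 - \<delta>)"

end

theory Submission
  imports Defs
begin

text \<open>ReLU networks of a fixed depth are closed under affine post-processing and parallel
  composition, and one more layer yields pointwise maxima and minima. As affine functions
  interpolate any two values at two points, the lattice version of the Stone-Weierstrass
  theorem makes scalar ReLU networks uniformly dense on compact sets; feeding approximations of
  \<open>ln (w x i + c)\<close> into the softmax then approximates \<open>w\<close> uniformly on compact sets.
  Compactness of \<open>\<Omega>\<close> and uniqueness of the weighted Frechet means make \<open>v \<mapsto> \<mu> v\<close>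
  continuous on the simplex, uniformly along \<open>w\<close> on compact sets, so networks whose outputs are
  close to \<open>w\<close> on a ball have means close to \<open>m\<close> there. For the probabilistic statement the
  ball is chosen to carry probability more than \<open>1 - \<delta>\<close>.\<close>

section \<open>ReLU networks of fixed depth\<close>

text \<open>The number \<open>k\<close> of
  hidden layers is recorded because only networks of equal depth can be run side by side.\<close>
definition relu_realizable :: "nat \<Rightarrow> nat \<Rightarrow> (real^'p::finite \<Rightarrow> nat \<Rightarrow> real) \<Rightarrow> bool" where
  "relu_realizable k m G \<longleftrightarrow> (\<exists>A a ls. length ls = k \<and>
      (\<forall>x. \<forall>j<m. apply_layers ls (\<lambda>j. inner (A j) x + a j) j = G x j))"

lemma apply_layers_snoc:
  "apply_layers (ls @ [(d, W, b)]) v = affine_layer d W b (relu \<circ> apply_layers ls v)"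
  by (induction ls v rule: apply_layers.induct) (auto simp: comp_def)

lemma affine_layer_cong:
  "(\<And>i. i < d \<Longrightarrow> v i = v' i) \<Longrightarrow> affine_layer d W b v = affine_layer d W b v'"
  unfolding affine_layer_def by (auto intro!: sum.cong)

lemma affine_layer_affine_layer:
  "affine_layer d C e (affine_layer d' W b v) =
   affine_layer d' (\<lambda>j l. \<Sum>i<d. C j i * W i l) (\<lambda>j. (\<Sum>i<d. C j i * b i) + e j) v"
  unfolding affine_layer_def
  by (auto simp: fun_eq_iff distrib_left sum.distrib sum_distrib_left sum_distrib_right
        mult.assoc intro: sum.swap)

lemma affine_layer_inner:
  "affine_layer d C e (\<lambda>j. inner (A j) x + a j) =
   (\<lambda>j. inner (\<Sum>i<d. C j i *\<^sub>R A i) x + ((\<Sum>i<d. C j i * a i) + e j))"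
  unfolding affine_layer_def
  by (auto simp: fun_eq_iff distrib_left sum.distrib inner_sum_left)

lemma relu_realizable_input: "relu_realizable 0 m (\<lambda>x j. inner (A j) x + a j)"
  unfolding relu_realizable_def by (intro exI[of _ A] exI[of _ a] exI[of _ "[]"]) simp

lemma relu_realizable_cong:
  "relu_realizable k m G \<Longrightarrow> (\<And>x j. j < m \<Longrightarrow> G x j = G' x j) \<Longrightarrow> relu_realizable k m G'"
  unfolding relu_realizable_def by metis

lemma relu_realizable_extend:
  assumes "relu_realizable k m G"
  obtains G' where "\<And>x j. j < m \<Longrightarrow> G' x j = G x j" and "\<And>m'. relu_realizable k m' G'"
proof -
  obtain A a ls where "length ls = k"
    and "\<forall>x. \<forall>j<m. apply_layers ls (\<lambda>j. inner (A j) x + a j) j = G x j"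
    using assms unfolding relu_realizable_def by blast
  then show thesis
    by (intro that[of "\<lambda>x. apply_layers ls (\<lambda>j. inner (A j) x + a j)"])
      (auto simp: relu_realizable_def)
qed

lemma relu_realizable_relu_layer:
  assumes "relu_realizable k m G" and "d \<le> m"
  shows "relu_realizable (Suc k) m' (\<lambda>x. affine_layer d W b (relu \<circ> G x))"
proof -
  obtain A a ls where "length ls = k"
    and G: "\<forall>x. \<forall>j<m. apply_layers ls (\<lambda>j. inner (A j) x + a j) j = G x j"
    using assms(1) unfolding relu_realizable_def by blast
  moreover have "affine_layer d W b (relu \<circ> apply_layers ls (\<lambda>j. inner (A j) x + a j)) =
      affine_layer d W b (relu \<circ> G x)" for x
    by (rule affine_layer_cong) (use G assms(2) in auto)
  ultimately show ?thesis
    unfolding relu_realizable_def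
    by (intro exI[of _ A] exI[of _ a] exI[of _ "ls @ [(d, W, b)]"]) (simp add: apply_layers_snoc)
qed

text \<open>An affine map after the last layer is absorbed into it, so the depth does not grow.\<close>
lemma relu_realizable_affine:
  assumes "relu_realizable k m G" and "d \<le> m"
  shows "relu_realizable k m' (\<lambda>x. affine_layer d C e (G x))"
proof -
  obtain A a ls where ls: "length ls = k"
    and G: "\<forall>x. \<forall>j<m. apply_layers ls (\<lambda>j. inner (A j) x + a j) j = G x j"
    using assms(1) unfolding relu_realizable_def by blast
  have G': "affine_layer d C e (G x) =
      affine_layer d C e (apply_layers ls (\<lambda>j. inner (A j) x + a j))" for x
    by (rule affine_layer_cong) (use G assms(2) in auto)
  show ?thesis
  proof (cases ls rule: rev_cases)
    case Nil
    then show ?thesis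
      unfolding relu_realizable_def G'
      by (intro exI[of _ "\<lambda>j. \<Sum>i<d. C j i *\<^sub>R A i"] exI[of _ "\<lambda>j. (\<Sum>i<d. C j i * a i) + e j"]
          exI[of _ "[]"]) (use ls in \<open>simp add: affine_layer_inner\<close>)
  next
    case (snoc ls' l)
    obtain d' W b where "l = (d', W, b)" by (cases l)
    then show ?thesis
      unfolding relu_realizable_def G'
      by (intro exI[of _ A] exI[of _ a]
          exI[of _ "ls' @ [(d', \<lambda>j l. \<Sum>i<d. C j i * W i l, \<lambda>j. (\<Sum>i<d. C j i * b i) + e j)]"])
        (use ls snoc in \<open>simp add: apply_layers_snoc affine_layer_affine_layer\<close>)
  qed
qed

text \<open>Two networks run side by side on interleaved neurons: the first one uses the even, the
  second one the odd coordinates.\<close>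
definition interleave :: "(nat \<Rightarrow> 'b) \<Rightarrow> (nat \<Rightarrow> 'b) \<Rightarrow> nat \<Rightarrow> 'b" where
  "interleave u v j = (if even j then u (j div 2) else v (j div 2))"

definition interleave_weights ::
    "nat \<Rightarrow> (nat \<Rightarrow> nat \<Rightarrow> real) \<Rightarrow> nat \<Rightarrow> (nat \<Rightarrow> nat \<Rightarrow> real) \<Rightarrow> nat \<Rightarrow> nat \<Rightarrow> real" where
  "interleave_weights d W d' W' j i =
     (if even j then (if even i \<and> i div 2 < d then W (j div 2) (i div 2) else 0)
      else (if odd i \<and> i div 2 < d' then W' (j div 2) (i div 2) else 0))"

fun parallel_layers ::
    "(nat \<times> (nat \<Rightarrow> nat \<Rightarrow> real) \<times> (nat \<Rightarrow> real)) list \<Rightarrow>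
     (nat \<times> (nat \<Rightarrow> nat \<Rightarrow> real) \<times> (nat \<Rightarrow> real)) list \<Rightarrow>
     (nat \<times> (nat \<Rightarrow> nat \<Rightarrow> real) \<times> (nat \<Rightarrow> real)) list" where
  "parallel_layers ((d, W, b) # ls) ((d', W', b') # ls') =
     (2 * max d d', interleave_weights d W d' W', interleave b b') # parallel_layers ls ls'"
| "parallel_layers _ _ = []"

lemma sum_lessThan_double:
  fixes f :: "nat \<Rightarrow> 'b::comm_monoid_add"
  shows "(\<Sum>i<2 * d. f i) = (\<Sum>i<d. f (2 * i)) + (\<Sum>i<d. f (2 * i + 1))"
  by (induction d) (auto simp: algebra_simps)

lemma affine_layer_interleave:
  "affine_layer (2 * max d d') (interleave_weights d W d' W') (interleave b b') (interleave u u') =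
   interleave (affine_layer d W b u) (affine_layer d' W' b' u')"
proof -
  have trunc: "(\<Sum>i<D. if i < d then f i else 0) = (\<Sum>i<d. f i)" if "d \<le> D"
    for d D and f :: "nat \<Rightarrow> real"
  proof -
    have "{..<D} \<inter> {i. i < d} = {..<d}" using that by auto
    then show ?thesis by (simp add: sum.If_cases)
  qed
  show ?thesis
    by (rule ext, unfold affine_layer_def interleave_def interleave_weights_def sum_lessThan_double)
      (auto simp: if_distrib[of "\<lambda>t. t * _"] trunc cong: if_cong)
qed

lemma apply_layers_parallel:
  "length ls = length ls' \<Longrightarrow>
   apply_layers (parallel_layers ls ls') (interleave v v') =
   interleave (apply_layers ls v) (apply_layers ls' v')"
proof (induction ls ls' arbitrary: v v' rule: parallel_layers.induct)
  case (1 d W b ls d' W' b' ls')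
  have "relu \<circ> interleave v v' = interleave (relu \<circ> v) (relu \<circ> v')"
    by (auto simp: interleave_def)
  with 1 show ?case by (simp add: affine_layer_interleave)
qed (auto simp: interleave_def)

lemma relu_realizable_interleave:
  assumes "relu_realizable k m G" and "relu_realizable k m H"
  shows "relu_realizable k (2 * m) (\<lambda>x. interleave (G x) (H x))"
proof -
  obtain A a ls where ls: "length ls = k"
    and G: "\<forall>x. \<forall>j<m. apply_layers ls (\<lambda>j. inner (A j) x + a j) j = G x j"
    using assms(1) unfolding relu_realizable_def by blast
  obtain A' a' ls' where ls': "length ls' = k"
    and H: "\<forall>x. \<forall>j<m. apply_layers ls' (\<lambda>j. inner (A' j) x + a' j) j = H x j"
    using assms(2) unfolding relu_realizable_def by blast
  have input: "(\<lambda>j. inner (interleave A A' j) x + interleave a a' j) =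
      interleave (\<lambda>j. inner (A j) x + a j) (\<lambda>j. inner (A' j) x + a' j)" for x
    by (auto simp: interleave_def)
  have "length (parallel_layers ls ls') = k"
    using ls ls' by (induction ls ls' arbitrary: k rule: parallel_layers.induct) auto
  moreover have "apply_layers (parallel_layers ls ls')
      (\<lambda>j. inner (interleave A A' j) x + interleave a a' j) j = interleave (G x) (H x) j"
    if "j < 2 * m" for x j
    using that G H by (simp add: input apply_layers_parallel ls ls') (auto simp: interleave_def)
  ultimately show ?thesis
    unfolding relu_realizable_def by blast
qed

text \<open>A layer computing the identity as \<open>relu t - relu (- t)\<close> makes every network deeper.\<close>
lemma relu_realizable_Suc:
  assumes "relu_realizable k m G"
  shows "relu_realizable (Suc k) m G"
proof -
  define C :: "nat \<Rightarrow> nat \<Rightarrow> real"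
    where "C j i = (if i = j div 2 then (if even j then 1 else - 1) else 0)" for j i
  define W :: "nat \<Rightarrow> nat \<Rightarrow> real"
    where "W j i = (if i = 2 * j then 1 else if i = 2 * j + 1 then - 1 else 0)" for j i
  have "relu_realizable k (2 * m) (\<lambda>x. affine_layer m C (\<lambda>_. 0) (G x))"
    using assms by (rule relu_realizable_affine) simp
  then have "relu_realizable (Suc k) m
      (\<lambda>x. affine_layer (2 * m) W (\<lambda>_. 0) (relu \<circ> affine_layer m C (\<lambda>_. 0) (G x)))"
    by (rule relu_realizable_relu_layer) simp
  then show ?thesis
  proof (rule relu_realizable_cong)
    fix x j assume "j < m"
    have odd_ne_even: "Suc (2 * i) \<noteq> 2 * j" for i by presburger
    from \<open>j < m\<close>
    show "affine_layer (2 * m) W (\<lambda>_. 0) (relu \<circ> affine_layer m C (\<lambda>_. 0) (G x)) j = G x j"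
      unfolding affine_layer_def sum_lessThan_double C_def W_def
      by (simp add: if_distrib[of "\<lambda>t. t * _"] relu_def odd_ne_even cong: if_cong)
  qed
qed

lemma relu_realizable_mono:
  assumes "relu_realizable k m G" and "k \<le> k'"
  shows "relu_realizable k' m G"
  using assms(2,1) by (induction k' rule: dec_induct) (auto intro: relu_realizable_Suc)

lemma relu_realizable_scalar_affine:
  assumes "relu_realizable k 1 (\<lambda>x _. f x)"
  shows "relu_realizable k m (\<lambda>x _. c * f x + e)"
proof -
  have "relu_realizable k m (\<lambda>x. affine_layer 1 (\<lambda>_ _. c) (\<lambda>_. e) (\<lambda>_. f x))"
    using assms by (rule relu_realizable_affine) simp
  then show ?thesis
    by (rule relu_realizable_cong) (simp add: affine_layer_def)
qed

lemma continuous_on_apply_layers: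
  "(\<And>j. continuous_on S (\<lambda>x. v x j)) \<Longrightarrow> continuous_on S (\<lambda>x. apply_layers ls (v x) j)"
proof (induction ls arbitrary: v)
  case (Cons l ls)
  obtain d W b where l: "l = (d, W, b)" by (cases l)
  have "continuous_on S (\<lambda>x. affine_layer d W b (relu \<circ> v x) j)" for j
    unfolding affine_layer_def relu_def o_def using Cons.prems by (intro continuous_intros)
  then show ?case using Cons.IH by (simp add: l)
qed simp

lemma continuous_on_relu_realizable:
  assumes "relu_realizable k m G" and "j < m"
  shows "continuous_on S (\<lambda>x. G x j)"
proof -
  obtain A a ls where "\<forall>x. \<forall>j<m. apply_layers ls (\<lambda>j. inner (A j) x + a j) j = G x j"
    using assms(1) unfolding relu_realizable_def by blast
  then have "(\<lambda>x. G x j) = (\<lambda>x. apply_layers ls (\<lambda>j. inner (A j) x + a j) j)"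
    using assms(2) by auto
  then show ?thesis
    by (simp only:) (intro continuous_on_apply_layers continuous_intros)
qed

definition relu_function :: "(real^'p::finite \<Rightarrow> real) \<Rightarrow> bool" where
  "relu_function f \<longleftrightarrow> (\<exists>k. relu_realizable k 1 (\<lambda>x _. f x))"

lemma continuous_on_relu_function: "relu_function f \<Longrightarrow> continuous_on S f"
  unfolding relu_function_def using continuous_on_relu_realizable[of _ 1 "\<lambda>x _. f x" 0] by auto

lemma relu_function_affine: "relu_function (\<lambda>x. inner A x + c)"
  unfolding relu_function_def using relu_realizable_input[of 1 "\<lambda>_. A" "\<lambda>_. c"] by blast

lemma relu_function_uminus: "relu_function f \<Longrightarrow> relu_function (\<lambda>x. - f x)"
  unfolding relu_function_def using relu_realizable_scalar_affine[of _ f 1 "- 1" 0] by auto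

lemma relu_function_common_depth:
  assumes "relu_function f" and "relu_function g"
  obtains k where "relu_realizable k 1 (\<lambda>x _. f x)" and "relu_realizable k 1 (\<lambda>x _. g x)"
proof -
  obtain k k' where "relu_realizable k 1 (\<lambda>x _. f x)" "relu_realizable k' 1 (\<lambda>x _. g x)"
    using assms unfolding relu_function_def by blast
  then show thesis
    by (intro that[of "max k k'"]) (auto elim: relu_realizable_mono)
qed

text \<open>\<open>max s t = relu s - relu (- s) + relu (t - s)\<close>\<close>
lemma relu_function_max:
  assumes "relu_function f" and "relu_function g"
  shows "relu_function (\<lambda>x. max (f x) (g x))"
proof -
  define C :: "nat \<Rightarrow> nat \<Rightarrow> real" where
    "C j i = (if j = 0 then (if i = 0 then 1 else 0)
              else if j = 1 then (if i = 0 then - 1 else 0)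
              else (if i = 0 then - 1 else 1))" for j i
  define W :: "nat \<Rightarrow> nat \<Rightarrow> real" where "W j i = (if i = 1 then - 1 else 1)" for j i
  obtain k where "relu_realizable k 1 (\<lambda>x _. f x)" "relu_realizable k 1 (\<lambda>x _. g x)"
    using assms by (rule relu_function_common_depth)
  then have "relu_realizable k 2 (\<lambda>x. interleave (\<lambda>_. f x) (\<lambda>_. g x))"
    using relu_realizable_interleave by fastforce
  then have "relu_realizable k 3 (\<lambda>x. affine_layer 2 C (\<lambda>_. 0) (interleave (\<lambda>_. f x) (\<lambda>_. g x)))"
    by (rule relu_realizable_affine) simp
  then have "relu_realizable (Suc k) 1 (\<lambda>x. affine_layer 3 W (\<lambda>_. 0)
      (relu \<circ> affine_layer 2 C (\<lambda>_. 0) (interleave (\<lambda>_. f x) (\<lambda>_. g x))))"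
    by (rule relu_realizable_relu_layer) simp
  then have "relu_realizable (Suc k) 1 (\<lambda>x _. max (f x) (g x))"
    by (rule relu_realizable_cong)
      (simp add: affine_layer_def interleave_def C_def W_def numeral_3_eq_3 numeral_2_eq_2 relu_def)
  then show ?thesis
    unfolding relu_function_def by blast
qed

lemma relu_function_min:
  assumes "relu_function f" and "relu_function g"
  shows "relu_function (\<lambda>x. min (f x) (g x))"
proof -
  have "relu_function (\<lambda>x. - max (- f x) (- g x))"
    using assms by (intro relu_function_uminus relu_function_max)
  moreover have "- max (- s) (- t) = min s t" for s t :: real
    by linarith
  ultimately show ?thesis
    by simp
qed

lemma relu_function_interpolates: "\<exists>g. relu_function g \<and> g x = f x \<and> g y = f y"
proof (cases "x = y")
  case True
  then show ?thesis
    using relu_function_affine[of 0 "f x"] by auto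
next
  case False
  define A where "A = ((f y - f x) / (norm (y - x))\<^sup>2) *\<^sub>R (y - x)"
  have "inner A y - inner A x = (f y - f x) / (norm (y - x))\<^sup>2 * inner (y - x) (y - x)"
    by (simp add: A_def inner_diff_right right_diff_distrib diff_divide_distrib)
  also have "\<dots> = f y - f x"
    using False by (simp add: power2_norm_eq_inner)
  finally have "inner A y - inner A x = f y - f x" .
  then show ?thesis
    using relu_function_affine[of A "f x - inner A x"] by (intro exI) auto
qed

lemma relu_realizable_vector:
  assumes "\<And>i. i < n \<Longrightarrow> relu_function (f i)"
  shows "\<exists>k. relu_realizable k n (\<lambda>x i. f i x)"
  using assms
proof (induction n)
  case 0
  show ?case
    unfolding relu_realizable_def by (auto intro!: exI[of _ "[]"])
next
  case (Suc n)
  obtain k where "relu_realizable k n (\<lambda>x i. f i x)"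
    using Suc by auto
  then obtain F where F: "\<And>x j. j < n \<Longrightarrow> F x j = f j x" and "\<And>m. relu_realizable k m F"
    by (rule relu_realizable_extend) auto
  obtain k' where "relu_realizable k' 1 (\<lambda>x _. f n x)"
    using Suc.prems unfolding relu_function_def by blast
  then have "relu_realizable k' m (\<lambda>x _. f n x)" for m
    using relu_realizable_scalar_affine[of k' "f n" m 1 0] by simp
  then have "relu_realizable (max k k') (Suc n) F"
    and "relu_realizable (max k k') (Suc n) (\<lambda>x _. f n x)"
    using \<open>\<And>m. relu_realizable k m F\<close> by (meson relu_realizable_mono max.cobounded1 max.cobounded2)+
  from relu_realizable_interleave[OF this]
  have "relu_realizable (max k k') (Suc n) (\<lambda>x. affine_layer (2 * Suc n)
     (\<lambda>j i. if i = (if j < n then 2 * j else 1) then 1 else 0) (\<lambda>_. 0)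
     (interleave (F x) (\<lambda>_. f n x)))"
    by (rule relu_realizable_affine) simp
  then have "relu_realizable (max k k') (Suc n) (\<lambda>x i. f i x)"
    by (rule relu_realizable_cong)
      (auto simp: affine_layer_def if_distrib[of "\<lambda>t. t * _"] interleave_def F less_Suc_eq
        cong: if_cong)
  then show ?case ..
qed

section \<open>Lattice approximation of continuous functions\<close>

lemma compact_finite_cover_strict:
  fixes K :: "'a::metric_space set" and h :: "'a \<Rightarrow> 'a \<Rightarrow> real"
  assumes "compact K" and "\<And>y. y \<in> K \<Longrightarrow> continuous_on K (h y)" and "\<And>y. y \<in> K \<Longrightarrow> h y y < 0"
  obtains T where "T \<subseteq> K" and "finite T" and "\<And>z. z \<in> K \<Longrightarrow> \<exists>y\<in>T. h y z < 0"
proof -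
  have "\<exists>r>0. \<forall>z\<in>K. dist z y < r \<longrightarrow> h y z < 0" if "y \<in> K" for y
  proof -
    obtain r where "r > 0" and "\<forall>z\<in>K. dist z y < r \<longrightarrow> dist (h y z) (h y y) < - h y y"
      using assms(2,3)[OF \<open>y \<in> K\<close>] \<open>y \<in> K\<close> unfolding continuous_on_iff
      by (meson neg_0_less_iff_less)
    then show ?thesis
      by (intro exI[of _ r]) (auto simp: dist_real_def)
  qed
  then obtain r where r: "\<And>y. y \<in> K \<Longrightarrow> r y > 0 \<and> (\<forall>z\<in>K. dist z y < r y \<longrightarrow> h y z < 0)"
    by metis
  have "K \<subseteq> (\<Union>y\<in>K. ball y (r y))"
    using r by force
  then obtain T where "T \<subseteq> K" "finite T" "K \<subseteq> (\<Union>y\<in>T. ball y (r y))"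
    using compactE_image[OF assms(1), of K "\<lambda>y. ball y (r y)"] by blast
  then show thesis
  proof (intro that)
    fix z assume "z \<in> K"
    then obtain y where "y \<in> T" and "dist y z < r y"
      using \<open>K \<subseteq> (\<Union>y\<in>T. ball y (r y))\<close> by auto
    then show "\<exists>y\<in>T. h y z < 0"
      using r[of y] \<open>T \<subseteq> K\<close> \<open>z \<in> K\<close> by (metis dist_commute subsetD)
  qed
qed

lemma Max_image_closed:
  assumes "finite T" and "T \<noteq> {}" and "\<And>y. y \<in> T \<Longrightarrow> g y \<in> F"
    and "\<And>u v. u \<in> F \<Longrightarrow> v \<in> F \<Longrightarrow> (\<lambda>x. max (u x) (v x)) \<in> F"
  shows "(\<lambda>x. Max ((\<lambda>y. g y x) ` T)) \<in> F"
  using assms(1-3)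
proof (induction T rule: finite_ne_induct)
  case (insert y T)
  then show ?case
    using assms(4)[of "g y"] by simp
qed simp

lemma Min_image_closed:
  assumes "finite T" and "T \<noteq> {}" and "\<And>y. y \<in> T \<Longrightarrow> g y \<in> F"
    and "\<And>u v. u \<in> F \<Longrightarrow> v \<in> F \<Longrightarrow> (\<lambda>x. min (u x) (v x)) \<in> F"
  shows "(\<lambda>x. Min ((\<lambda>y. g y x) ` T)) \<in> F"
  using assms(1-3)
proof (induction T rule: finite_ne_induct)
  case (insert y T)
  then show ?case
    using assms(4)[of "g y"] by simp
qed simp

context
  fixes K :: "'a::metric_space set" and F :: "('a \<Rightarrow> real) set" and f :: "'a \<Rightarrow> real"
  assumes compact: "compact K"
    and continuous: "continuous_on K f" "\<And>g. g \<in> F \<Longrightarrow> continuous_on K g"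
    and max_closed: "\<And>u v. u \<in> F \<Longrightarrow> v \<in> F \<Longrightarrow> (\<lambda>x. max (u x) (v x)) \<in> F"
    and min_closed: "\<And>u v. u \<in> F \<Longrightarrow> v \<in> F \<Longrightarrow> (\<lambda>x. min (u x) (v x)) \<in> F"
    and interpolates: "\<And>x y. x \<in> K \<Longrightarrow> y \<in> K \<Longrightarrow> \<exists>g\<in>F. g x = f x \<and> g y = f y"
begin

lemma lattice_approximation_at:
  assumes "x \<in> K" and "\<epsilon> > 0"
  shows "\<exists>h\<in>F. (\<forall>z\<in>K. h z < f z + \<epsilon>) \<and> f x - \<epsilon> < h x"
proof -
  obtain g where g: "\<And>y. y \<in> K \<Longrightarrow> g y \<in> F \<and> g y x = f x \<and> g y y = f y"
    using interpolates[OF \<open>x \<in> K\<close>] by metis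
  obtain T where T: "T \<subseteq> K" "finite T" and cover: "\<And>z. z \<in> K \<Longrightarrow> \<exists>y\<in>T. g y z - f z - \<epsilon> < 0"
  proof (rule compact_finite_cover_strict[OF compact])
    show "continuous_on K (\<lambda>z. g y z - f z - \<epsilon>)" if "y \<in> K" for y
      using g[OF that] continuous by (intro continuous_intros) auto
  qed (use g \<open>\<epsilon> > 0\<close> in auto)
  have "T \<noteq> {}"
    using cover \<open>x \<in> K\<close> by blast
  show ?thesis
  proof (intro bexI conjI ballI)
    show "(\<lambda>z. Min ((\<lambda>y. g y z) ` T)) \<in> F"
      using T \<open>T \<noteq> {}\<close> g by (intro Min_image_closed min_closed) auto
    show "Min ((\<lambda>y. g y z) ` T) < f z + \<epsilon>" if z: "z \<in> K" for z
    proof -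
      obtain y where "y \<in> T" and "g y z - f z - \<epsilon> < 0"
        using cover[OF z] by blast
      moreover have "Min ((\<lambda>y. g y z) ` T) \<le> g y z"
        using \<open>y \<in> T\<close> T by simp
      ultimately show ?thesis
        by linarith
    qed
    show "f x - \<epsilon> < Min ((\<lambda>y. g y x) ` T)"
      using T \<open>T \<noteq> {}\<close> g \<open>\<epsilon> > 0\<close> by (auto simp: Min_gr_iff)
  qed
qed

lemma lattice_approximation:
  assumes "K \<noteq> {}" and "\<epsilon> > 0"
  shows "\<exists>g\<in>F. \<forall>x\<in>K. \<bar>g x - f x\<bar> < \<epsilon>"
proof -
  obtain h where h: "\<And>x. x \<in> K \<Longrightarrow> h x \<in> F \<and> (\<forall>z\<in>K. h x z < f z + \<epsilon>) \<and> f x - \<epsilon> < h x x"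
    using lattice_approximation_at[OF _ \<open>\<epsilon> > 0\<close>] by metis
  obtain T where T: "T \<subseteq> K" "finite T" and cover: "\<And>z. z \<in> K \<Longrightarrow> \<exists>x\<in>T. f z - \<epsilon> - h x z < 0"
  proof (rule compact_finite_cover_strict[OF compact])
    show "continuous_on K (\<lambda>z. f z - \<epsilon> - h x z)" if "x \<in> K" for x
      using h[OF that] continuous by (intro continuous_intros) auto
  qed (use h in auto)
  have "T \<noteq> {}"
    using cover \<open>K \<noteq> {}\<close> by blast
  show ?thesis
  proof (intro bexI ballI)
    show "(\<lambda>z. Max ((\<lambda>x. h x z) ` T)) \<in> F"
      using T \<open>T \<noteq> {}\<close> h by (intro Max_image_closed max_closed) auto
    show "\<bar>Max ((\<lambda>x. h x z) ` T) - f z\<bar> < \<epsilon>" if z: "z \<in> K" for z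
    proof -
      obtain x where "x \<in> T" and "f z - \<epsilon> - h x z < 0"
        using cover[OF z] by blast
      moreover have "h x z \<le> Max ((\<lambda>x. h x z) ` T)"
        using \<open>x \<in> T\<close> T by simp
      moreover have "Max ((\<lambda>x. h x z) ` T) < f z + \<epsilon>"
        using T \<open>T \<noteq> {}\<close> h z by (auto simp: Max_less_iff)
      ultimately show ?thesis
        by linarith
    qed
  qed
qed

end

lemma relu_function_approximation:
  fixes f :: "real^'p::finite \<Rightarrow> real"
  assumes "compact K" and "continuous_on K f" and "\<epsilon> > 0"
  obtains g where "relu_function g" and "\<And>x. x \<in> K \<Longrightarrow> \<bar>g x - f x\<bar> < \<epsilon>"
proof (cases "K = {}")
  case True
  then show thesis
    using that relu_function_affine by blast
next
  case False
  have "\<exists>g\<in>Collect relu_function. \<forall>x\<in>K. \<bar>g x - f x\<bar> < \<epsilon>"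
    using assms relu_function_interpolates False
    by (intro lattice_approximation)
      (auto intro: continuous_on_relu_function relu_function_max relu_function_min)
  then show thesis
    using that by blast
qed

section \<open>Softmax networks approximating probability vectors\<close>

lemma prob_simplex_le_1:
  assumes "v \<in> prob_simplex n" and "i < n"
  shows "v i \<le> 1"
proof -
  have "v i \<le> (\<Sum>j<n. v j)"
    using assms by (intro member_le_sum) (auto simp: prob_simplex_def)
  then show ?thesis
    using assms(1) by (simp add: prob_simplex_def)
qed

lemma sum_exp_pos: "0 < n \<Longrightarrow> 0 < (\<Sum>j<n::nat. exp (z j :: real))"
  by (intro sum_pos) auto

lemma softmax_in_prob_simplex:
  assumes "0 < n"
  shows "softmax n z \<in> prob_simplex n"
proof -
  have "(\<Sum>i<n. softmax n z i) = (\<Sum>i<n. exp (z i) / (\<Sum>j<n. exp (z j)))"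
    by (simp add: softmax_def)
  also have "\<dots> = 1"
    using sum_exp_pos[OF assms, of z] by (simp flip: sum_divide_distrib)
  finally show ?thesis
    using sum_exp_pos[OF assms, of z] by (simp add: prob_simplex_def softmax_def)
qed

lemma continuous_on_softmax:
  assumes "\<And>j. continuous_on S (\<lambda>x. z x j)"
  shows "continuous_on S (\<lambda>x. softmax n (z x) i)"
proof (cases "i < n")
  case True
  then have "(\<Sum>j<n. exp (z x j)) \<noteq> 0" for x
    using sum_exp_pos[of n "z x"] by simp
  then show ?thesis
    unfolding softmax_def using True assms by (auto intro!: continuous_intros)
qed (simp add: softmax_def)

lemma softmax_le_exp_mult:
  assumes "i < n" and "\<And>j. j < n \<Longrightarrow> \<bar>z j - z' j\<bar> \<le> t"
  shows "softmax n z i \<le> exp (2 * t) * softmax n z' i"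
proof -
  have "exp (z j) \<le> exp t * exp (z' j)" "exp (z' j) \<le> exp t * exp (z j)" if "j < n" for j
    using assms(2)[OF that] by (simp_all flip: exp_add)
  then have S: "(\<Sum>j<n. exp (z' j)) \<le> exp t * (\<Sum>j<n. exp (z j))"
    and zi: "exp (z i) \<le> exp t * exp (z' i)"
    using assms(1) by (auto simp: sum_distrib_left intro!: sum_mono)
  have pos: "0 < (\<Sum>j<n. exp (z j))" "0 < (\<Sum>j<n. exp (z' j))"
    using assms(1) by (simp_all add: sum_exp_pos)
  have "softmax n z i = exp (z i) / (\<Sum>j<n. exp (z j))"
    using assms(1) by (simp add: softmax_def)
  also have "\<dots> \<le> (exp t * exp (z' i)) / ((\<Sum>j<n. exp (z' j)) / exp t)"
    using pos S zi by (intro frac_le) (auto simp: field_simps)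
  also have "\<dots> = exp (2 * t) * softmax n z' i"
    using assms(1) by (simp add: softmax_def exp_add[symmetric] field_simps)
  finally show ?thesis .
qed

lemma softmax_perturbation:
  assumes "i < n" and "\<And>j. j < n \<Longrightarrow> \<bar>z j - z' j\<bar> \<le> t"
  shows "\<bar>softmax n z i - softmax n z' i\<bar> \<le> exp (2 * t) - 1"
proof -
  have "0 < n" and "0 \<le> t"
    using assms(1) assms(2)[OF assms(1)] by linarith+
  have bound: "(exp (2 * t) - 1) * softmax n v i \<le> exp (2 * t) - 1" for v
    using prob_simplex_le_1[OF softmax_in_prob_simplex[OF \<open>0 < n\<close>] assms(1)] \<open>0 \<le> t\<close>
    by (intro mult_left_le) auto
  have "softmax n z i - softmax n z' i \<le> (exp (2 * t) - 1) * softmax n z' i"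
    "softmax n z' i - softmax n z i \<le> (exp (2 * t) - 1) * softmax n z i"
    using softmax_le_exp_mult[OF assms(1), of z z' t] softmax_le_exp_mult[OF assms(1), of z' z t]
      assms by (auto simp: algebra_simps abs_minus_commute)
  then show ?thesis
    using bound[of z] bound[of z'] unfolding abs_le_iff by linarith
qed

lemma softmax_ln_shift:
  assumes "u \<in> prob_simplex n" and "c > 0" and "i < n"
  shows "\<bar>softmax n (\<lambda>j. ln (u j + c)) i - u i\<bar> \<le> n * c"
proof -
  have u: "0 \<le> u j" "u j \<le> 1" if "j < n" for j
    using assms(1) that by (auto simp: prob_simplex_def intro: prob_simplex_le_1)
  have "(\<Sum>j<n. exp (ln (u j + c))) = (\<Sum>j<n. u j + c)"
    using u assms(2) by (intro sum.cong) (auto simp: add_nonneg_pos)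
  also have "\<dots> = 1 + n * c"
    using assms(1) by (simp add: sum.distrib prob_simplex_def)
  finally have "softmax n (\<lambda>j. ln (u j + c)) i = (u i + c) / (1 + n * c)"
    using u[OF assms(3)] assms(2,3) by (simp add: softmax_def add_nonneg_pos)
  moreover have "1 \<le> 1 + n * c"
    using assms(2) by simp
  ultimately have "softmax n (\<lambda>j. ln (u j + c)) i - u i = c * (1 - n * u i) / (1 + n * c)"
    by (simp add: field_simps)
  then have "\<bar>softmax n (\<lambda>j. ln (u j + c)) i - u i\<bar> = c * \<bar>1 - n * u i\<bar> / (1 + n * c)"
    using assms(2) \<open>1 \<le> 1 + n * c\<close> by (simp add: abs_mult)
  also have "\<dots> \<le> c * \<bar>1 - n * u i\<bar> / 1"
    using \<open>1 \<le> 1 + n * c\<close> assms(2) by (intro divide_left_mono) (auto intro: add_pos_nonneg)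
  also have "\<dots> \<le> c * n"
    unfolding div_by_1
  proof (intro mult_left_mono)
    have "0 \<le> n * u i" "n * u i \<le> n" "1 \<le> real n"
      using u[OF assms(3)] assms(3) by (simp_all add: mult_left_le)
    then show "\<bar>1 - n * u i\<bar> \<le> n"
      by linarith
  qed (use assms(2) in simp)
  finally show ?thesis
    by (simp add: mult.commute)
qed

lemma nn_eval_in_prob_simplex: "0 < n \<Longrightarrow> nn_eval n \<theta> x \<in> prob_simplex n"
  by (cases \<theta>) (simp add: nn_eval_def softmax_in_prob_simplex)

lemma continuous_on_nn_eval: "continuous_on S (\<lambda>x. nn_eval n \<theta> x i)"
  by (cases \<theta>) (auto simp: nn_eval_def intro!: continuous_on_softmax continuous_on_apply_layers
      continuous_intros)

text \<open>The network outputs logits close to \<open>ln (w x i + c)\<close>; the shift \<open>c > 0\<close> keeps the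
  logarithm finite where a weight vanishes, at the price of an error \<open>n * c\<close>.\<close>
lemma relu_network_approximation:
  fixes w :: "real^'p::finite \<Rightarrow> nat \<Rightarrow> real"
  assumes "compact K" and w: "\<And>x. x \<in> K \<Longrightarrow> w x \<in> prob_simplex n"
    and "\<And>i. i < n \<Longrightarrow> continuous_on K (\<lambda>x. w x i)" and "\<eta> > 0"
  obtains \<theta> :: "'p network" where "\<And>x i. x \<in> K \<Longrightarrow> i < n \<Longrightarrow> \<bar>nn_eval n \<theta> x i - w x i\<bar> < \<eta>"
proof -
  define c where "c = \<eta> / (4 * (n + 1))"
  define t where "t = ln (1 + \<eta> / 2) / 2"
  have "c > 0" and "n * c \<le> \<eta> / 4"
    using \<open>\<eta> > 0\<close> by (simp_all add: c_def field_simps)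
  have "t > 0" and "exp (2 * t) - 1 = \<eta> / 2"
    using \<open>\<eta> > 0\<close> by (simp_all add: t_def)
  have pos: "0 < w x i + c" if "x \<in> K" and "i < n" for x i
    using w[OF that(1)] that(2) \<open>c > 0\<close> by (simp add: prob_simplex_def add_nonneg_pos)
  have "continuous_on K (\<lambda>x. ln (w x i + c))" if "i < n" for i
    using assms(3)[OF that] pos[OF _ that] by (intro continuous_intros) force+
  then have "\<exists>g. relu_function g \<and> (\<forall>x\<in>K. \<bar>g x - ln (w x i + c)\<bar> < t)" if "i < n" for i
    using relu_function_approximation[OF \<open>compact K\<close> _ \<open>t > 0\<close>] that by metis
  then obtain g where g: "\<And>i. i < n \<Longrightarrow> relu_function (g i)"
    and g_close: "\<And>i x. i < n \<Longrightarrow> x \<in> K \<Longrightarrow> \<bar>g i x - ln (w x i + c)\<bar> < t"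
    by metis
  obtain k where "relu_realizable k n (\<lambda>x i. g i x)"
    using relu_realizable_vector[of n g] g by blast
  then obtain A a ls
    where logits: "\<And>x j. j < n \<Longrightarrow> apply_layers ls (\<lambda>j. inner (A j) x + a j) j = g j x"
    unfolding relu_realizable_def by blast
  show thesis
  proof (rule that[of "(A, a, ls)"])
    fix x i assume "x \<in> K" and "i < n"
    have "\<bar>nn_eval n (A, a, ls) x i - softmax n (\<lambda>j. ln (w x j + c)) i\<bar> \<le> exp (2 * t) - 1"
      unfolding nn_eval_def using \<open>i < n\<close> g_close[OF _ \<open>x \<in> K\<close>]
      by (simp add: softmax_perturbation less_imp_le logits)
    moreover have "\<bar>softmax n (\<lambda>j. ln (w x j + c)) i - w x i\<bar> \<le> n * c"
      using w[OF \<open>x \<in> K\<close>] \<open>c > 0\<close> \<open>i < n\<close> by (rule softmax_ln_shift)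
    ultimately show "\<bar>nn_eval n (A, a, ls) x i - w x i\<bar> < \<eta>"
      using \<open>n * c \<le> \<eta> / 4\<close> \<open>exp (2 * t) - 1 = \<eta> / 2\<close> \<open>\<eta> > 0\<close> by linarith
  qed
qed

section \<open>Continuity of weighted Frechet means\<close>

lemma is_frechet_mean_frechet_mean:
  "\<exists>!y. is_frechet_mean \<Omega> n Y v y \<Longrightarrow> is_frechet_mean \<Omega> n Y v (frechet_mean \<Omega> n Y v)"
  unfolding frechet_mean_def by (rule theI')

lemma frechet_mean_eqI:
  "\<exists>!y. is_frechet_mean \<Omega> n Y v y \<Longrightarrow> is_frechet_mean \<Omega> n Y v a \<Longrightarrow> frechet_mean \<Omega> n Y v = a"
  unfolding frechet_mean_def by (rule the1_equality)

lemma is_frechet_mean_limit: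
  assumes "closed \<Omega>" and "\<And>k. is_frechet_mean \<Omega> n Y (v k) (y k)"
    and "\<And>i. i < n \<Longrightarrow> (\<lambda>k. v k i) \<longlonglongrightarrow> u i" and "y \<longlonglongrightarrow> a"
  shows "is_frechet_mean \<Omega> n Y u a"
  unfolding is_frechet_mean_def
proof (intro conjI ballI)
  show "a \<in> \<Omega>"
    using closed_sequentially[OF assms(1) _ assms(4)] assms(2) by (auto simp: is_frechet_mean_def)
  fix z assume "z \<in> \<Omega>"
  have "(\<lambda>k. frechet_obj n Y (v k) (y k)) \<longlonglongrightarrow> frechet_obj n Y u a"
    "(\<lambda>k. frechet_obj n Y (v k) z) \<longlonglongrightarrow> frechet_obj n Y u z"
    unfolding frechet_obj_def using assms(3,4) by (auto intro!: tendsto_intros)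
  then show "frechet_obj n Y u a \<le> frechet_obj n Y u z"
    by (rule LIMSEQ_le) (use assms(2) \<open>z \<in> \<Omega>\<close> in \<open>auto simp: is_frechet_mean_def\<close>)
qed

context
  fixes \<Omega> :: "'a::metric_space set" and n :: nat and Y :: "nat \<Rightarrow> 'a"
  assumes compact: "compact \<Omega>"
    and unique: "\<And>v. v \<in> prob_simplex n \<Longrightarrow> \<exists>!y. is_frechet_mean \<Omega> n Y v y"
begin

lemma frechet_mean_in:
  "v \<in> prob_simplex n \<Longrightarrow> frechet_mean \<Omega> n Y v \<in> \<Omega>"
  using is_frechet_mean_frechet_mean[OF unique] by (simp add: is_frechet_mean_def)

text \<open>Every subsequence of the means has, by compactness of \<open>\<Omega>\<close>, a convergent subsequence, and
  its limit is a mean for \<open>u\<close>, hence the unique one.\<close>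
lemma frechet_mean_tendsto:
  fixes v :: "nat \<Rightarrow> nat \<Rightarrow> real"
  assumes "\<And>k. v k \<in> prob_simplex n" and "u \<in> prob_simplex n"
    and "\<And>i. i < n \<Longrightarrow> (\<lambda>k. v k i) \<longlonglongrightarrow> u i"
  shows "(\<lambda>k. frechet_mean \<Omega> n Y (v k)) \<longlonglongrightarrow> frechet_mean \<Omega> n Y u"
proof (rule tendstoI, rule ccontr)
  fix \<epsilon> :: real
  let ?M = "frechet_mean \<Omega> n Y"
  assume "0 < \<epsilon>" and "\<not> (\<forall>\<^sub>F k in sequentially. dist (?M (v k)) (?M u) < \<epsilon>)"
  then have infinitely_far: "infinite {k. \<epsilon> \<le> dist (?M (v k)) (?M u)}"
    unfolding cofinite_eq_sequentially[symmetric] eventually_cofinite by (simp add: not_less)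
  obtain r :: "nat \<Rightarrow> nat" where "strict_mono r" and far: "\<And>k. \<epsilon> \<le> dist (?M (v (r k))) (?M u)"
    using infinite_enumerate[OF infinitely_far] by auto
  obtain s a where "strict_mono s" and lim: "(\<lambda>k. ?M (v (r (s k)))) \<longlonglongrightarrow> a"
    by (rule seq_compactE[OF compact_imp_seq_compact[OF compact], of "\<lambda>k. ?M (v (r k))"])
      (use frechet_mean_in[OF assms(1)] in \<open>auto simp: comp_def\<close>)
  have v_lim: "(\<lambda>k. v (r (s k)) i) \<longlonglongrightarrow> u i" if "i < n" for i
    using LIMSEQ_subseq_LIMSEQ[OF assms(3)[OF that]
        strict_mono_o[OF \<open>strict_mono r\<close> \<open>strict_mono s\<close>]]
    by (simp add: comp_def)
  have "is_frechet_mean \<Omega> n Y u a"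
  proof (rule is_frechet_mean_limit[OF compact_imp_closed[OF compact] _ _ lim])
    show "is_frechet_mean \<Omega> n Y (v (r (s k))) (?M (v (r (s k))))" for k
      using is_frechet_mean_frechet_mean[OF unique[OF assms(1)]] .
  qed (rule v_lim)
  then have "a = ?M u"
    using frechet_mean_eqI[OF unique[OF assms(2)]] by simp
  then have "(\<lambda>k. dist (?M (v (r (s k)))) (?M u)) \<longlonglongrightarrow> 0"
    using tendsto_dist[OF lim tendsto_const[of "?M u"]] by simp
  then have "\<epsilon> \<le> 0"
    by (rule LIMSEQ_le_const) (use far in auto)
  with \<open>0 < \<epsilon>\<close> show False
    by simp
qed

lemma continuous_on_frechet_mean_comp:
  fixes g :: "'x::metric_space \<Rightarrow> nat \<Rightarrow> real"
  assumes "\<And>x. x \<in> S \<Longrightarrow> g x \<in> prob_simplex n" and "\<And>i. i < n \<Longrightarrow> continuous_on S (\<lambda>x. g x i)"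
  shows "continuous_on S (\<lambda>x. frechet_mean \<Omega> n Y (g x))"
  unfolding continuous_on_sequentially comp_def
proof (intro ballI allI impI)
  fix x xs assume "x \<in> S" and "(\<forall>k. xs k \<in> S) \<and> xs \<longlonglongrightarrow> x"
  then show "(\<lambda>k. frechet_mean \<Omega> n Y (g (xs k))) \<longlonglongrightarrow> frechet_mean \<Omega> n Y (g x)"
    using assms(2) by (intro frechet_mean_tendsto assms(1))
      (auto simp: continuous_on_sequentially comp_def)
qed

lemma frechet_mean_uniformly_close:
  fixes w :: "'x::metric_space \<Rightarrow> nat \<Rightarrow> real"
  assumes "compact K" and "\<And>x. x \<in> K \<Longrightarrow> w x \<in> prob_simplex n"
    and "\<And>i. i < n \<Longrightarrow> continuous_on K (\<lambda>x. w x i)" and "\<epsilon> > 0"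
  shows "\<exists>\<delta>>0. \<forall>x\<in>K. \<forall>v\<in>prob_simplex n. (\<forall>i<n. \<bar>v i - w x i\<bar> < \<delta>) \<longrightarrow>
           dist (frechet_mean \<Omega> n Y v) (frechet_mean \<Omega> n Y (w x)) < \<epsilon>"
proof (rule ccontr)
  let ?M = "frechet_mean \<Omega> n Y"
  assume "\<not> ?thesis"
  then have "\<forall>k. \<exists>x v. x \<in> K \<and> v \<in> prob_simplex n \<and>
      (\<forall>i<n. \<bar>v i - w x i\<bar> < inverse (Suc k)) \<and> \<epsilon> \<le> dist (?M v) (?M (w x))"
    by (metis inverse_positive_iff_positive of_nat_0_less_iff zero_less_Suc not_less)
  then obtain xs vs where xs: "\<And>k. xs k \<in> K" and vs: "\<And>k. vs k \<in> prob_simplex n"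
    and close: "\<And>k i. i < n \<Longrightarrow> \<bar>vs k i - w (xs k) i\<bar> < inverse (Suc k)"
    and far: "\<And>k. \<epsilon> \<le> dist (?M (vs k)) (?M (w (xs k)))"
    by metis
  obtain x r where "x \<in> K" "strict_mono r" and lim: "(\<lambda>k. xs (r k)) \<longlonglongrightarrow> x"
    using seq_compactE[OF compact_imp_seq_compact[OF assms(1)], of xs] xs by (auto simp: comp_def)
  have w_lim: "(\<lambda>k. w (xs (r k)) i) \<longlonglongrightarrow> w x i" if "i < n" for i
    using assms(3)[OF that] \<open>x \<in> K\<close> xs lim by (auto simp: continuous_on_sequentially comp_def)
  have "(\<lambda>k. vs (r k) i - w (xs (r k)) i) \<longlonglongrightarrow> 0" if "i < n" for i
  proof (rule Lim_null_comparison)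
    show "\<forall>\<^sub>F k in sequentially. norm (vs (r k) i - w (xs (r k)) i) \<le> inverse (Suc (r k))"
      using close[OF that] by (simp add: less_imp_le)
    show "(\<lambda>k. inverse (real (Suc (r k)))) \<longlonglongrightarrow> 0"
      using LIMSEQ_subseq_LIMSEQ[OF LIMSEQ_inverse_real_of_nat \<open>strict_mono r\<close>]
      by (simp add: comp_def)
  qed
  then have v_lim: "(\<lambda>k. vs (r k) i) \<longlonglongrightarrow> w x i" if "i < n" for i
    using tendsto_add[OF _ w_lim] that by fastforce
  have "(\<lambda>k. ?M (vs (r k))) \<longlonglongrightarrow> ?M (w x)" "(\<lambda>k. ?M (w (xs (r k)))) \<longlonglongrightarrow> ?M (w x)"
    using frechet_mean_tendsto vs xs assms(2) \<open>x \<in> K\<close> v_lim w_lim by auto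
  from tendsto_dist[OF this] have "(\<lambda>k. dist (?M (vs (r k))) (?M (w (xs (r k))))) \<longlonglongrightarrow> 0"
    by simp
  then have "\<epsilon> \<le> 0"
    by (rule LIMSEQ_le_const) (use far in auto)
  then show False
    using assms(4) by simp
qed

lemma frechet_mean_network_approximation:
  fixes w :: "real^'p::finite \<Rightarrow> nat \<Rightarrow> real"
  assumes "0 < n" and "compact K" and "\<And>x. x \<in> K \<Longrightarrow> w x \<in> prob_simplex n"
    and "\<And>i. i < n \<Longrightarrow> continuous_on K (\<lambda>x. w x i)" and "\<epsilon> > 0"
  obtains \<theta> :: "'p network"
  where "\<And>x. x \<in> K \<Longrightarrow> dist (frechet_mean \<Omega> n Y (nn_eval n \<theta> x)) (frechet_mean \<Omega> n Y (w x)) < \<epsilon>"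
proof -
  obtain \<delta> where "\<delta> > 0" and \<delta>: "\<forall>x\<in>K. \<forall>v\<in>prob_simplex n. (\<forall>i<n. \<bar>v i - w x i\<bar> < \<delta>) \<longrightarrow>
      dist (frechet_mean \<Omega> n Y v) (frechet_mean \<Omega> n Y (w x)) < \<epsilon>"
    using frechet_mean_uniformly_close[OF assms(2-5)] by blast
  obtain \<theta> :: "'p network" where "\<And>x i. x \<in> K \<Longrightarrow> i < n \<Longrightarrow> \<bar>nn_eval n \<theta> x i - w x i\<bar> < \<delta>"
    using relu_network_approximation[OF assms(2-4) \<open>\<delta> > 0\<close>] by blast
  then show thesis
    using \<delta> nn_eval_in_prob_simplex[OF \<open>0 < n\<close>] by (intro that) blast
qed

end

lemma stoch_bounded_prob_less:
  fixes X :: "'a \<Rightarrow> 'b::real_normed_vector" and h :: "'c \<Rightarrow> 'b \<Rightarrow> real"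
  assumes "prob_space M" and "X \<in> borel_measurable M" and "stoch_bounded M X" and "\<delta> > 0"
    and "\<And>\<theta>. h \<theta> \<in> borel_measurable borel" and "\<And>C. \<exists>\<theta>. \<forall>x\<in>cball 0 C. h \<theta> x < \<epsilon>"
  shows "\<exists>\<theta>. measure M {\<omega>\<in>space M. h \<theta> (X \<omega>) < \<epsilon>} > 1 - \<delta>"
proof -
  interpret prob_space M
    by (fact assms(1))
  obtain C where C: "prob {\<omega>\<in>space M. norm (X \<omega>) \<le> C} > 1 - \<delta>"
    using assms(3,4) unfolding stoch_bounded_def by blast
  obtain \<theta> where \<theta>: "\<forall>x\<in>cball 0 C. h \<theta> x < \<epsilon>"
    using assms(6) by blast
  have "prob {\<omega>\<in>space M. norm (X \<omega>) \<le> C} \<le> prob {\<omega>\<in>space M. h \<theta> (X \<omega>) < \<epsilon>}"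
  proof (rule finite_measure_mono)
    show "{\<omega>\<in>space M. norm (X \<omega>) \<le> C} \<subseteq> {\<omega>\<in>space M. h \<theta> (X \<omega>) < \<epsilon>}"
      using \<theta> by auto
    show "{\<omega>\<in>space M. h \<theta> (X \<omega>) < \<epsilon>} \<in> events"
      using measurable_compose[OF assms(2,5)] borel_measurable_const by (rule borel_measurable_less)
  qed
  then show ?thesis
    using C by (intro exI[of _ \<theta>]) simp
qed

theorem theorem4p2:
  fixes \<Omega> :: "'a::metric_space set"
    and n :: nat
    and Y :: "nat \<Rightarrow> 'a"
    and w :: "real ^ 'p \<Rightarrow> (nat \<Rightarrow> real)"
  assumes "compact \<Omega>"
    and "n \<ge> 1"
    and "\<forall>i<n. Y i \<in> \<Omega>"
    and "\<forall>v\<in>prob_simplex n. \<exists>!y. is_frechet_mean \<Omega> n Y v y"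
    and "\<forall>x. w x \<in> prob_simplex n"
    and "\<forall>i<n. continuous_on UNIV (\<lambda>x. w x i)"
  shows "(\<forall>\<epsilon>>0. \<exists>\<theta> :: 'p network.
            (SUP x\<in>cball 0 1. dist (frechet_mean \<Omega> n Y (nn_eval n \<theta> x))
                                   (frechet_mean \<Omega> n Y (w x))) < \<epsilon>)
       \<and> (\<forall>(M :: 'b measure) (X :: 'b \<Rightarrow> real ^ 'p).
            prob_space M \<longrightarrow> X \<in> borel_measurable M \<longrightarrow> stoch_bounded M X \<longrightarrow>
            (\<forall>\<epsilon>>0. \<forall>\<delta>>0. \<exists>\<theta> :: 'p network.
               measure M {\<omega>\<in>space M.
                  dist (frechet_mean \<Omega> n Y (nn_eval n \<theta> (X \<omega>)))
                       (frechet_mean \<Omega> n Y (w (X \<omega>))) < \<epsilon>} > 1 - \<delta>))"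
proof -
  let ?err = "\<lambda>\<theta> x. dist (frechet_mean \<Omega> n Y (nn_eval n \<theta> x)) (frechet_mean \<Omega> n Y (w x))"
  note unique = assms(4)[rule_format]
  have "0 < n"
    using assms(2) by simp
  have approx: "\<exists>\<theta> :: 'p network. \<forall>x\<in>K. ?err \<theta> x < \<epsilon>" if "compact K" and "\<epsilon> > 0" for K \<epsilon>
    using frechet_mean_network_approximation[OF assms(1) unique \<open>0 < n\<close> that(1) _ _ that(2)]
      assms(5,6) by (metis continuous_on_subset subset_UNIV)
  have err_measurable: "?err \<theta> \<in> borel_measurable borel" for \<theta> :: "'p network"
    by (intro borel_measurable_continuous_onI continuous_on_dist continuous_on_nn_eval
        continuous_on_frechet_mean_comp[OF assms(1) unique] nn_eval_in_prob_simplex[OF \<open>0 < n\<close>])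
      (use assms(5,6) in auto)
  show ?thesis
  proof (intro conjI allI impI)
    fix \<epsilon> :: real assume "\<epsilon> > 0"
    then obtain \<theta> :: "'p network" where "\<forall>x\<in>cball 0 1. ?err \<theta> x < \<epsilon> / 2"
      using approx[OF compact_cball half_gt_zero] by blast
    then have "(SUP x\<in>cball 0 1. ?err \<theta> x) \<le> \<epsilon> / 2"
      by (intro cSUP_least) (auto intro: less_imp_le)
    then show "\<exists>\<theta> :: 'p network. (SUP x\<in>cball 0 1. ?err \<theta> x) < \<epsilon>"
      using \<open>\<epsilon> > 0\<close> by (intro exI[of _ \<theta>]) simp
  next
    fix M :: "'b measure" and X :: "'b \<Rightarrow> real ^ 'p" and \<epsilon> \<delta> :: real
    assume "prob_space M" "X \<in> borel_measurable M" "stoch_bounded M X" "\<epsilon> > 0" "\<delta> > 0"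
    then show "\<exists>\<theta> :: 'p network. measure M {\<omega>\<in>space M. ?err \<theta> (X \<omega>) < \<epsilon>} > 1 - \<delta>"
      using approx[OF compact_cball]
      by (intro stoch_bounded_prob_less[where h = ?err] err_measurable) auto
  qed
qed

end
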